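(* Let $\gamma > \frac{1 + \sqrt{5}}{2}$ and let $I$ be a $\gamma$-stable instance of the metric Steiner tree problem with optimal Steiner tree $\mathrm{OPT}$. Let $H$ be a subgraph of $\mathrm{OPT}$ and let $ab$ be an edge of $H$. If $c \in V$ is a vertex with $w_{ca} \ge \gamma w_{ab}$, then $ca$ is not an edge of $\mathrm{OPT}$.
   Context: An instance of the metric Steiner tree problem consists of a finite set $V$ of points of a metric space with metric $d$, a set $T \subseteq V$ of terminals, and the complete graph on $V$ with edge weights $w_{uv} = d(u,v)$. Points of $V \setminus T$ are Steiner points. A Steiner tree is a tree in this complete graph whose vertex set contains all of $T$; its weight is the sum of its edge weights. For $\gamma > 1$, the instance is $\gamma$-stable if it has a minimum-weight Steiner tree $\mathrm{OPT}$ such that for every $w' : V \times V \to \mathbb{R}_{\ge 0}$ with $w_{uv} \le w'_{uv} \le \gamma w_{uv}$ for all $u,v$, every minimum-weight Steiner tree with respect to $w'$ equals $\mathrm{OPT}$. *)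

theory Defs
  imports Complex_Main
begin

definition metric_on :: "'a set \<Rightarrow> ('a \<Rightarrow> 'a \<Rightarrow> real) \<Rightarrow> bool" where
  "metric_on V d \<longleftrightarrow>
     (\<forall>u\<in>V. \<forall>v\<in>V. d u v \<ge> 0 \<and> (d u v = 0 \<longleftrightarrow> u = v) \<and> d u v = d v u) \<and>
     (\<forall>u\<in>V. \<forall>v\<in>V. \<forall>x\<in>V. d u x \<le> d u v + d v x)"

definition complete_edges :: "'a set \<Rightarrow> 'a set set" where
  "complete_edges W = {{u, v} | u v. u \<in> W \<and> v \<in> W \<and> u \<noteq> v}"

text \<open>Edge weight induced by the metric: w_{uv} = d(u,v).\<close>
definition edge_w :: "('a \<Rightarrow> 'a \<Rightarrow> real) \<Rightarrow> 'a set \<Rightarrow> real" where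
  "edge_w d e = (SOME x. \<exists>u v. e = {u, v} \<and> x = d u v)"

definition is_tree :: "'a set \<Rightarrow> 'a set \<Rightarrow> 'a set set \<Rightarrow> bool" where
  "is_tree V W E \<longleftrightarrow> W \<subseteq> V \<and> W \<noteq> {} \<and> finite W \<and> E \<subseteq> complete_edges W \<and>
     (\<forall>x\<in>W. \<forall>y\<in>W. (\<lambda>p q. {p, q} \<in> E)\<^sup>*\<^sup>* x y) \<and>
     card E = card W - 1"

definition steiner_tree :: "'a set \<Rightarrow> 'a set \<Rightarrow> 'a set \<Rightarrow> 'a set set \<Rightarrow> bool" where
  "steiner_tree V T W E \<longleftrightarrow> is_tree V W E \<and> T \<subseteq> W"

definition min_steiner_tree ::
  "'a set \<Rightarrow> 'a set \<Rightarrow> ('a set \<Rightarrow> real) \<Rightarrow> 'a set \<Rightarrow> 'a set set \<Rightarrow> bool" where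
  "min_steiner_tree V T c W E \<longleftrightarrow> steiner_tree V T W E \<and>
     (\<forall>W' E'. steiner_tree V T W' E' \<longrightarrow> sum c E \<le> sum c E')"

definition perturbation ::
  "real \<Rightarrow> 'a set \<Rightarrow> ('a \<Rightarrow> 'a \<Rightarrow> real) \<Rightarrow> ('a set \<Rightarrow> real) \<Rightarrow> bool" where
  "perturbation \<gamma> V d w' \<longleftrightarrow>
     (\<forall>u\<in>V. \<forall>v\<in>V. u \<noteq> v \<longrightarrow> d u v \<le> w' {u, v} \<and> w' {u, v} \<le> \<gamma> * d u v)"

definition steiner_instance :: "'a set \<Rightarrow> ('a \<Rightarrow> 'a \<Rightarrow> real) \<Rightarrow> 'a set \<Rightarrow> bool" where
  "steiner_instance V d T \<longleftrightarrow> finite V \<and> metric_on V d \<and> T \<subseteq> V"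

definition stable_with_opt ::
  "real \<Rightarrow> 'a set \<Rightarrow> ('a \<Rightarrow> 'a \<Rightarrow> real) \<Rightarrow> 'a set \<Rightarrow> 'a set \<Rightarrow> 'a set set \<Rightarrow> bool" where
  "stable_with_opt \<gamma> V d T W0 E0 \<longleftrightarrow>
     \<gamma> > 1 \<and> steiner_instance V d T \<and> min_steiner_tree V T (edge_w d) W0 E0 \<and>
     (\<forall>w'. perturbation \<gamma> V d w' \<longrightarrow>
        (\<forall>W E. min_steiner_tree V T w' W E \<longrightarrow> W = W0 \<and> E = E0))"

definition gamma_stable :: "real \<Rightarrow> 'a set \<Rightarrow> ('a \<Rightarrow> 'a \<Rightarrow> real) \<Rightarrow> 'a set \<Rightarrow> bool" where
  "gamma_stable \<gamma> V d T \<longleftrightarrow> (\<exists>W0 E0. stable_with_opt \<gamma> V d T W0 E0)"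

end

theory Submission
  imports Defs
begin

text \<open>Suppose the edge \<open>ca\<close> were in OPT. Exchanging it for \<open>cb\<close> yields another Steiner tree
  (\<open>cb\<close> cannot already lie in OPT, since OPT would then contain the triangle \<open>abc\<close>). Raise the
  weight of \<open>ca\<close> by the factor \<open>\<gamma>\<close>; by stability OPT remains the optimum, so
  \<open>\<gamma> d(c,a) \<le> d(c,b)\<close>. But \<open>d(c,b) \<le> d(c,a) + d(a,b) \<le> (1 + 1/\<gamma>) d(c,a) < \<gamma> d(c,a)\<close>,
  because \<open>\<gamma>\<^sup>2 > \<gamma> + 1\<close> exactly when \<open>\<gamma>\<close> exceeds the golden ratio.\<close>

abbreviation joined :: "'a set set \<Rightarrow> 'a \<Rightarrow> 'a \<Rightarrow> bool" where
  "joined E \<equiv> (\<lambda>p q. {p, q} \<in> E)\<^sup>*\<^sup>*"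

lemma joined_edge: "{x, y} \<in> E \<Longrightarrow> joined E x y"
  by (rule r_into_rtranclp)

lemma joined_sym:
  assumes "joined E x y"
  shows "joined E y x"
  using assms
proof (induction rule: rtranclp_induct)
  case (step y z)
  then have "{z, y} \<in> E" by (simp add: insert_commute)
  from this step.IH show ?case by (rule converse_rtranclp_into_rtranclp)
qed simp

lemma joined_exchange:
  assumes sub: "E - {{u, v}} \<subseteq> E'" and uv: "joined E' u v" and xy: "joined E x y"
  shows "joined E' x y"
  using xy
proof (induction rule: rtranclp_induct)
  case (step y z)
  have "joined E' y z"
  proof (cases "{y, z} = {u, v}")
    case True
    then show ?thesis using uv joined_sym[OF uv] by (auto simp: doubleton_eq_iff)
  next
    case False
    then show ?thesis using step.hyps(2) sub by (blast intro: joined_edge)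
  qed
  with step.IH show ?case by (rule rtranclp_trans)
qed simp

text \<open>Map every vertex other than the root \<open>r\<close> to an edge towards a vertex one step closer to \<open>r\<close>;
  this map is injective.\<close>
lemma joined_card_vertices_le:
  assumes fW: "finite W" and fE: "finite E" and r: "r \<in> W"
    and conn: "\<forall>x\<in>W. joined E x r"
  shows "card W \<le> card E + 1"
proof -
  define R where "R = (\<lambda>p q. {p, q} \<in> E)"
  define depth where "depth x = (LEAST n. (R ^^ n) x r)" for x
  have depth_path: "(R ^^ depth x) x r" if "(R ^^ n) x r" for x n
    unfolding depth_def using that by (rule LeastI)
  have depth_le: "depth x \<le> n" if "(R ^^ n) x r" for x n
    unfolding depth_def using that by (rule Least_le)
  have closer: "\<exists>y. {x, y} \<in> E \<and> depth y + 1 = depth x" if "x \<in> W" "x \<noteq> r" for x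
  proof -
    have "R\<^sup>*\<^sup>* x r" using conn that(1) by (simp add: R_def)
    then obtain n where "(R ^^ n) x r" by (auto simp: rtranclp_power)
    then have path: "(R ^^ depth x) x r" by (rule depth_path)
    then have "depth x \<noteq> 0" using that(2) by (metis relpowp_0_E)
    then obtain m where m: "depth x = Suc m" by (cases "depth x") auto
    with path have "(R ^^ Suc m) x r" by simp
    then obtain y where y: "R x y" "(R ^^ m) y r" by (blast dest: relpowp_Suc_D2)
    have "(R ^^ Suc (depth y)) x r"
      using y(1) depth_path[OF y(2)] by (rule relpowp_Suc_I2)
    then have "depth x \<le> Suc (depth y)" by (rule depth_le)
    moreover have "depth y \<le> m" using y(2) by (rule depth_le)
    ultimately show ?thesis using y(1) m unfolding R_def by auto
  qed
  define f where "f x = (SOME e. \<exists>y. e = {x, y} \<and> e \<in> E \<and> depth y + 1 = depth x)" for x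
  have f: "\<exists>y. f x = {x, y} \<and> f x \<in> E \<and> depth y + 1 = depth x" if "x \<in> W - {r}" for x
    unfolding f_def by (rule someI_ex) (use closer that in auto)
  have "inj_on f (W - {r})"
  proof (rule inj_onI)
    fix x x' assume x: "x \<in> W - {r}" and x': "x' \<in> W - {r}" and eq: "f x = f x'"
    obtain y where y: "f x = {x, y}" "depth y + 1 = depth x" using f[OF x] by blast
    obtain y' where y': "f x' = {x', y'}" "depth y' + 1 = depth x'" using f[OF x'] by blast
    show "x = x'"
    proof (rule ccontr)
      assume "x \<noteq> x'"
      then have "x = y'" "x' = y" using y y' eq by (auto simp: doubleton_eq_iff)
      then show False using y y' by auto
    qed
  qed
  moreover have "f ` (W - {r}) \<subseteq> E" using f by blast
  ultimately have "card (W - {r}) \<le> card E" using fE by (metis card_inj_on_le)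
  then show ?thesis using r fW by auto
qed

lemma is_tree_finite_edges: "is_tree V W E \<Longrightarrow> finite E"
  unfolding is_tree_def complete_edges_def
  by (rule finite_subset[of _ "Pow W"]) auto

lemma is_tree_remove_edge_disconnects:
  assumes tree: "is_tree V W E" and "e \<in> E"
  shows "\<not> (\<forall>x\<in>W. \<forall>y\<in>W. joined (E - {e}) x y)"
proof
  assume conn: "\<forall>x\<in>W. \<forall>y\<in>W. joined (E - {e}) x y"
  have fE: "finite E" using tree by (rule is_tree_finite_edges)
  obtain r where r: "r \<in> W" and fW: "finite W" and card: "card E = card W - 1"
    using tree unfolding is_tree_def by blast
  have "card W \<le> card (E - {e}) + 1"
    using fW _ r by (rule joined_card_vertices_le) (use fE conn r in auto)
  moreover have "card (E - {e}) = card E - 1" using \<open>e \<in> E\<close> fE by simp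
  moreover have "card W > 0" using fW r by (auto simp: card_gt_0_iff)
  moreover have "card E > 0" using \<open>e \<in> E\<close> fE by (auto simp: card_gt_0_iff)
  ultimately show False using card by linarith
qed

lemma is_tree_exchange_edge:
  assumes tree: "is_tree V W E" and e: "{u, v} \<in> E"
    and f: "f \<in> complete_edges W" "f \<noteq> {u, v}"
    and uv: "joined (insert f (E - {{u, v}})) u v"
  shows "f \<notin> E" and "is_tree V W (insert f (E - {{u, v}}))"
proof -
  let ?E' = "insert f (E - {{u, v}})"
  have conn: "\<forall>x\<in>W. \<forall>y\<in>W. joined ?E' x y"
    using tree uv unfolding is_tree_def by (blast intro: joined_exchange[of E _ _ ?E'])
  show "f \<notin> E"
  proof
    assume "f \<in> E"
    then have "?E' = E - {{u, v}}" using f(2) by blast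
    then show False using is_tree_remove_edge_disconnects[OF tree e] conn by simp
  qed
  moreover have "finite E" "card E > 0"
    using e is_tree_finite_edges[OF tree] by (auto simp: card_gt_0_iff)
  ultimately have "card ?E' = card E" using e by simp
  then show "is_tree V W ?E'"
    using tree f conn unfolding is_tree_def by auto
qed

lemma is_tree_pivot_edge:
  assumes tree: "is_tree V W E" and ca: "{c, a} \<in> E" and ab: "{a, b} \<in> E" and "b \<noteq> c"
  shows "{c, b} \<notin> E" and "is_tree V W (insert {c, b} (E - {{c, a}}))"
proof -
  let ?E' = "insert {c, b} (E - {{c, a}})"
  have "a \<noteq> b" "b \<in> W" "c \<in> W"
    using ca ab tree unfolding is_tree_def complete_edges_def by (auto simp: doubleton_eq_iff)
  have "joined ?E' c b" by (rule joined_edge) simp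
  moreover have "joined ?E' b a"
    by (rule joined_edge) (use ab \<open>b \<noteq> c\<close> in \<open>auto simp: insert_commute doubleton_eq_iff\<close>)
  ultimately have "joined ?E' c a" by (rule rtranclp_trans)
  moreover have "{c, b} \<in> complete_edges W" "{c, b} \<noteq> {c, a}"
    using \<open>c \<in> W\<close> \<open>b \<in> W\<close> \<open>b \<noteq> c\<close> \<open>a \<noteq> b\<close> unfolding complete_edges_def by auto
  ultimately show "{c, b} \<notin> E" "is_tree V W ?E'"
    using is_tree_exchange_edge[OF tree ca] by blast+
qed

lemma edge_w_doubleton:
  assumes "metric_on V d" "u \<in> V" "v \<in> V"
  shows "edge_w d {u, v} = d u v"
proof -
  have "\<exists>x u' v'. {u, v} = {u', v'} \<and> x = d u' v'" by blast
  then have "\<exists>u' v'. {u, v} = {u', v'} \<and> edge_w d {u, v} = d u' v'"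
    unfolding edge_w_def by (rule someI_ex)
  then obtain u' v' where "{u, v} = {u', v'}" "edge_w d {u, v} = d u' v'" by blast
  then show ?thesis using assms unfolding metric_on_def by (auto simp: doubleton_eq_iff)
qed

lemma perturbation_scale_edge:
  assumes "metric_on V d" "\<gamma> \<ge> 1"
  shows "perturbation \<gamma> V d (\<lambda>e. if e = f then \<gamma> * edge_w d e else edge_w d e)"
  unfolding perturbation_def
proof (intro ballI impI)
  fix u v assume uv: "u \<in> V" "v \<in> V"
  have "d u v \<ge> 0" using assms(1) uv unfolding metric_on_def by blast
  then show "d u v \<le> (if {u, v} = f then \<gamma> * edge_w d {u, v} else edge_w d {u, v}) \<and>
      (if {u, v} = f then \<gamma> * edge_w d {u, v} else edge_w d {u, v}) \<le> \<gamma> * d u v"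
    unfolding edge_w_doubleton[OF assms(1) uv] using assms(2) by (auto simp: mult_le_cancel_right1)
qed

lemma min_steiner_tree_exists:
  assumes "finite V" and "steiner_tree V T W E"
  shows "\<exists>W' E'. min_steiner_tree V T c W' E'"
proof -
  define S where "S = {(W, E). steiner_tree V T W E}"
  have "S \<subseteq> Pow V \<times> Pow (Pow V)"
    unfolding S_def steiner_tree_def is_tree_def complete_edges_def by auto
  then have "finite S" using assms(1) by (meson finite_Pow_iff finite_SigmaI finite_subset)
  moreover have "S \<noteq> {}" using assms(2) unfolding S_def by blast
  ultimately obtain p where "is_arg_min (\<lambda>p. sum c (snd p)) (\<lambda>p. p \<in> S) p"
    using ex_is_arg_min_if_finite by blast
  then have "p \<in> S" "\<forall>q\<in>S. sum c (snd p) \<le> sum c (snd q)"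
    unfolding is_arg_min_linorder by auto
  then show ?thesis unfolding S_def min_steiner_tree_def by (cases p) fastforce
qed

lemma min_steiner_tree_exchange_le:
  assumes "min_steiner_tree V T w W E" and "e \<in> E" and "f \<notin> E"
    and "steiner_tree V T W (insert f (E - {e}))"
  shows "w e \<le> w f"
proof -
  have fE: "finite E"
    using assms(1) is_tree_finite_edges unfolding min_steiner_tree_def steiner_tree_def by blast
  have "sum w E \<le> sum w (insert f (E - {e}))"
    using assms(1,4) unfolding min_steiner_tree_def by blast
  also have "\<dots> = w f + sum w (E - {e})" using fE assms(3) by simp
  finally show ?thesis using sum.remove[OF fE assms(2), of w] by simp
qed

lemma stable_opt_min_under_perturbation:
  assumes "stable_with_opt \<gamma> V d T W0 E0" and "perturbation \<gamma> V d w'"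
  shows "min_steiner_tree V T w' W0 E0"
proof -
  have "finite V" "steiner_tree V T W0 E0"
    using assms(1) unfolding stable_with_opt_def steiner_instance_def min_steiner_tree_def by blast+
  then obtain W E where "min_steiner_tree V T w' W E" using min_steiner_tree_exists by blast
  moreover have "W = W0 \<and> E = E0" using assms calculation unfolding stable_with_opt_def by blast
  ultimately show ?thesis by simp
qed

lemma stable_exchange_weight_le:
  assumes stable: "stable_with_opt \<gamma> V d T W0 E0" and e: "{u, v} \<in> E0" and f: "{x, y} \<notin> E0"
    and V: "u \<in> V" "v \<in> V" "x \<in> V" "y \<in> V"
    and tree: "is_tree V W0 (insert {x, y} (E0 - {{u, v}}))"
  shows "\<gamma> * d u v \<le> d x y"
proof -
  have "\<gamma> > 1" and met: "metric_on V d" and "T \<subseteq> W0"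
    using stable unfolding stable_with_opt_def steiner_instance_def min_steiner_tree_def
      steiner_tree_def by blast+
  define w' where "w' e = (if e = {u, v} then \<gamma> * edge_w d e else edge_w d e)" for e
  have "min_steiner_tree V T w' W0 E0"
    using stable_opt_min_under_perturbation[OF stable] perturbation_scale_edge[OF met] \<open>\<gamma> > 1\<close>
    unfolding w'_def by simp
  then have "w' {u, v} \<le> w' {x, y}"
    using e f tree \<open>T \<subseteq> W0\<close> by (intro min_steiner_tree_exchange_le) (auto simp: steiner_tree_def)
  moreover have "{x, y} \<noteq> {u, v}" using e f by auto
  ultimately show ?thesis by (simp add: w'_def edge_w_doubleton[OF met] V)
qed

lemma golden_ratio_less_imp_less_square:
  fixes \<gamma> :: real
  assumes "\<gamma> > (1 + sqrt 5) / 2"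
  shows "\<gamma> + 1 < \<gamma>\<^sup>2"
proof -
  have "sqrt 5 < 2 * \<gamma> - 1" using assms by simp
  then have "(sqrt 5)\<^sup>2 < (2 * \<gamma> - 1)\<^sup>2" by (rule power_strict_mono) auto
  then show ?thesis by (simp add: power2_eq_square algebra_simps)
qed

lemma golden_triangle_bound:
  fixes \<gamma> x y z :: real
  assumes "\<gamma> > (1 + sqrt 5) / 2" and "x > 0" and "\<gamma> * y \<le> x" and "z \<le> x + y"
  shows "z < \<gamma> * x"
proof -
  have "(1 + sqrt 5) / 2 > 1" by simp
  then have "\<gamma> > 1" using assms(1) by linarith
  have "\<gamma> * z \<le> \<gamma> * (x + y)" using assms(4) \<open>\<gamma> > 1\<close> by (simp add: mult_left_mono)
  also have "\<dots> \<le> \<gamma> * x + x" using assms(3) by (simp add: distrib_left)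
  also have "\<dots> = (\<gamma> + 1) * x" by (simp add: algebra_simps)
  also have "\<dots> < \<gamma>\<^sup>2 * x"
    using golden_ratio_less_imp_less_square[OF assms(1)] assms(2) by (rule mult_strict_right_mono)
  finally show ?thesis using \<open>\<gamma> > 1\<close> by (simp add: power2_eq_square)
qed

theorem mainTheorem8:
  fixes \<gamma> :: real and V T W0 :: "'a set" and d :: "'a \<Rightarrow> 'a \<Rightarrow> real"
    and E0 H :: "'a set set" and a b c :: 'a
  assumes "\<gamma> > (1 + sqrt 5) / 2"
    and "stable_with_opt \<gamma> V d T W0 E0"
    and "H \<subseteq> E0"
    and "{a, b} \<in> H"
    and "c \<in> V"
    and "d c a \<ge> \<gamma> * d a b"
  shows "{c, a} \<notin> E0"
proof
  assume ca: "{c, a} \<in> E0"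
  have "\<gamma> > 1" and met: "metric_on V d" and tree: "is_tree V W0 E0"
    using assms(2) unfolding stable_with_opt_def steiner_instance_def min_steiner_tree_def
      steiner_tree_def by blast+
  have ab: "{a, b} \<in> E0" using assms(3,4) by blast
  then have "a \<in> W0" "b \<in> W0" "a \<noteq> b" "c \<noteq> a"
    using ca tree unfolding is_tree_def complete_edges_def by (auto simp: doubleton_eq_iff)
  then have "a \<in> V" "b \<in> V" using tree unfolding is_tree_def by auto
  have "d c a > 0" "d a b > 0" "d a b = d b a" "d c b \<le> d c a + d a b"
    using met \<open>a \<in> V\<close> \<open>b \<in> V\<close> \<open>c \<in> V\<close> \<open>a \<noteq> b\<close> \<open>c \<noteq> a\<close>
    unfolding metric_on_def by (metis order_neq_le_trans)+
  then have "b \<noteq> c" using assms(6) \<open>\<gamma> > 1\<close> by auto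
  then have "\<gamma> * d c a \<le> d c b"
    using stable_exchange_weight_le[OF assms(2) ca] is_tree_pivot_edge[OF tree ca ab]
      \<open>a \<in> V\<close> \<open>b \<in> V\<close> \<open>c \<in> V\<close> by blast
  moreover have "d c b < \<gamma> * d c a"
    using assms(1) \<open>d c a > 0\<close> assms(6) \<open>d c b \<le> d c a + d a b\<close>
    by (rule golden_triangle_bound)
  ultimately show False by simp
qed

end
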